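(* Let $X$ be a locally compact Hausdorff topological space, $Y$ a $T_1$-space whose set of branch points is locally finite, and $p:X\to Y$ an open continuous surjective map. Then $p$ has properties (COMP) and (CONT).
   Context: Two points of $Y$ are $T_2$-disjoint if they have disjoint neighborhoods; $y\in Y$ is a branch point if some $z\neq y$ is not $T_2$-disjoint from $y$. A subset $A\subset Y$ is locally finite if each point of $Y$ has a neighborhood meeting $A$ in finitely many points. Let $\Delta=\{p^{-1}(y):y\in Y\}$ (note $p$, being open continuous surjective, is a factor map). A $\Delta$-map is a continuous $h:X\to X$ mapping each element of $\Delta$ into some element of $\Delta$; $\mathrm{End}(X,\Delta)$ is the monoid of $\Delta$-maps, $\mathrm{End}(Y)=C(Y,Y)$, and $\psi(h)$ is the unique map with $p\circ h=\psi(h)\circ p$. Property (COMP): for every compact $L\subset Y$ there is a compact $K\subset X$ with $p(K)=L$. Property (CONT): $\psi:\mathrm{End}(X,\Delta)\to\mathrm{End}(Y)$ is continuous with respect to compact open topologies (generated by subbasic sets $\{f: f(K)\subset U\}$, $K$ compact, $U$ open). *)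

theory Defs
  imports "HOL-Analysis.Analysis"
begin

definition T2_disjoint :: "'b topology \<Rightarrow> 'b \<Rightarrow> 'b \<Rightarrow> bool" where
  "T2_disjoint Y y z \<longleftrightarrow>
     (\<exists>U V. openin Y U \<and> openin Y V \<and> y \<in> U \<and> z \<in> V \<and> disjnt U V)"

definition branch_point :: "'b topology \<Rightarrow> 'b \<Rightarrow> bool" where
  "branch_point Y y \<longleftrightarrow> y \<in> topspace Y \<and>
     (\<exists>z \<in> topspace Y. z \<noteq> y \<and> \<not> T2_disjoint Y y z)"

definition branch_points :: "'b topology \<Rightarrow> 'b set" where
  "branch_points Y = {y. branch_point Y y}"

definition locally_finite_set :: "'b topology \<Rightarrow> 'b set \<Rightarrow> bool" where
  "locally_finite_set Y A \<longleftrightarrow>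
     (\<forall>y \<in> topspace Y. \<exists>N. (\<exists>U. openin Y U \<and> y \<in> U \<and> U \<subseteq> N) \<and> N \<subseteq> topspace Y
        \<and> finite (N \<inter> A))"

definition Delta_map :: "'a topology \<Rightarrow> 'b topology \<Rightarrow> ('a \<Rightarrow> 'b) \<Rightarrow> ('a \<Rightarrow> 'a) \<Rightarrow> bool" where
  "Delta_map X Y p h \<longleftrightarrow> continuous_map X X h \<and>
     (\<forall>y \<in> topspace Y. \<exists>y' \<in> topspace Y.
        h ` {x \<in> topspace X. p x = y} \<subseteq> {x \<in> topspace X. p x = y'})"

definition End_Delta :: "'a topology \<Rightarrow> 'b topology \<Rightarrow> ('a \<Rightarrow> 'b) \<Rightarrow> ('a \<Rightarrow> 'a) set" where
  "End_Delta X Y p = {h. Delta_map X Y p h}"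

definition End_sp :: "'b topology \<Rightarrow> ('b \<Rightarrow> 'b) set" where
  "End_sp Y = {g. continuous_map Y Y g}"

text \<open>psi(h): the map with p o h = psi(h) o p on topspace X (well defined for Delta-maps
  since p is surjective); its values outside topspace Y are irrelevant.\<close>
definition psi :: "'a topology \<Rightarrow> ('a \<Rightarrow> 'b) \<Rightarrow> ('a \<Rightarrow> 'a) \<Rightarrow> 'b \<Rightarrow> 'b" where
  "psi X p h = (\<lambda>y. p (h (SOME x. x \<in> topspace X \<and> p x = y)))"

definition compact_open :: "'c topology \<Rightarrow> 'd topology \<Rightarrow> ('c \<Rightarrow> 'd) set \<Rightarrow> ('c \<Rightarrow> 'd) topology" where
  "compact_open A B S = topology_generated_by
     {{f \<in> S. f ` K \<subseteq> U} | K U. compactin A K \<and> openin B U}"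

definition prop_COMP :: "'a topology \<Rightarrow> 'b topology \<Rightarrow> ('a \<Rightarrow> 'b) \<Rightarrow> bool" where
  "prop_COMP X Y p \<longleftrightarrow> (\<forall>L. compactin Y L \<longrightarrow> (\<exists>K. compactin X K \<and> p ` K = L))"

definition prop_CONT :: "'a topology \<Rightarrow> 'b topology \<Rightarrow> ('a \<Rightarrow> 'b) \<Rightarrow> bool" where
  "prop_CONT X Y p \<longleftrightarrow>
     continuous_map (compact_open X X (End_Delta X Y p)) (compact_open Y Y (End_sp Y)) (psi X p)"

end

theory Submission imports Defs begin

text \<open>Every point of (closure L) - L, for L \<subseteq> Y compact, is a branch point: a non-branch point
  is separated from L by finitely many pairs of disjoint opens. These points therefore form a
  locally finite, hence closed, subset D of the T1 space Y, and L lies in the open set Y - D.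
  Since p is open and X is locally compact, L is covered by finitely many images of opens with
  compact closure inside the preimage of Y - D, giving a compact K0 with L \<subseteq> p ` K0 \<subseteq> Y - D;
  intersecting K0 with the closed preimage of closure L leaves a compact K with p ` K = L,
  which is (COMP). For (CONT), p ` K = L gives psi(h) ` L = p ` h ` K, so psi pulls the
  subbasic set {g. g ` L \<subseteq> U} back to the subbasic set {h. h ` K \<subseteq> p -` U}.\<close>

lemma locally_finite_set_subset:
  "locally_finite_set Y B \<Longrightarrow> A \<subseteq> B \<Longrightarrow> locally_finite_set Y A"
  unfolding locally_finite_set_def by (meson finite_subset inf_mono order_refl)

lemma closedin_locally_finite_set:
  assumes t1: "t1_space Y" and lf: "locally_finite_set Y A" and A: "A \<subseteq> topspace Y"
  shows "closedin Y A"
proof -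
  have "\<exists>T. openin Y T \<and> y \<in> T \<and> T \<subseteq> topspace Y - A" if y: "y \<in> topspace Y - A" for y
  proof -
    obtain N U where U: "openin Y U" "y \<in> U" "U \<subseteq> N" "N \<subseteq> topspace Y"
      and fin: "finite (N \<inter> A)"
      using lf DiffD1[OF y] unfolding locally_finite_set_def by meson
    have "finite (U \<inter> A)" using fin U(3) by (meson finite_subset inf_mono order_refl)
    then have "closedin Y (U \<inter> A)"
      using t1 U(3,4) unfolding t1_space_closedin_finite by blast
    then have "openin Y (U - (U \<inter> A))" using U(1) by (simp add: openin_diff)
    moreover have "U - (U \<inter> A) \<subseteq> topspace Y - A" using U(3,4) by blast
    ultimately show ?thesis using y U(2) by blast
  qed
  then have "openin Y (topspace Y - A)" by (subst openin_subopen) blast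
  then show ?thesis using A by (simp add: closedin_def)
qed

lemma closure_of_compact_diff_subset_branch_points:
  assumes L: "compactin Y L"
  shows "Y closure_of L - L \<subseteq> branch_points Y"
proof
  fix y assume y: "y \<in> Y closure_of L - L"
  then have yt: "y \<in> topspace Y" by (meson DiffD1 in_closure_of)
  show "y \<in> branch_points Y"
  proof (rule ccontr)
    assume nb: "y \<notin> branch_points Y"
    define \<U> where "\<U> = {U. openin Y U \<and> (\<exists>V. openin Y V \<and> y \<in> V \<and> disjnt V U)}"
    have "L \<subseteq> \<Union>\<U>"
    proof
      fix z assume z: "z \<in> L"
      then have "z \<in> topspace Y" "z \<noteq> y" using compactin_subset_topspace[OF L] y by auto
      then have "T2_disjoint Y y z" using nb yt unfolding branch_points_def branch_point_def by auto
      then show "z \<in> \<Union>\<U>" unfolding T2_disjoint_def \<U>_def by blast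
    qed
    moreover have "\<forall>U\<in>\<U>. openin Y U" unfolding \<U>_def by auto
    ultimately obtain F where F: "finite F" "F \<subseteq> \<U>" "L \<subseteq> \<Union>F"
      using L unfolding compactin_def by meson
    then have "\<forall>U\<in>F. \<exists>V. openin Y V \<and> y \<in> V \<and> disjnt V U" unfolding \<U>_def by auto
    then obtain g where g: "\<And>U. U \<in> F \<Longrightarrow> openin Y (g U) \<and> y \<in> g U \<and> disjnt (g U) U"
      by metis
    define T where "T = (\<Inter>U\<in>F. g U) \<inter> topspace Y"
    have "openin Y T" "y \<in> T" unfolding T_def using F(1) g yt by auto
    then obtain l where l: "l \<in> L" "l \<in> T" using DiffD1[OF y] unfolding in_closure_of by blast
    then obtain U where "U \<in> F" "l \<in> U" using F(3) by auto
    then show False using g[of U] l(2) unfolding T_def disjnt_def by auto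
  qed
qed

lemma compact_lift_into_open_preimage:
  assumes nb: "neighbourhood_base_of (compactin X) X"
    and om: "open_map X Y p" and cp: "continuous_map X Y p"
    and L: "compactin Y L" "L \<subseteq> p ` topspace X"
    and W: "openin Y W" "L \<subseteq> W"
  obtains K where "compactin X K" "K \<subseteq> {x \<in> topspace X. p x \<in> W}" "L \<subseteq> p ` K"
proof -
  define PW where "PW = {x \<in> topspace X. p x \<in> W}"
  have PWo: "openin X PW" unfolding PW_def using cp W(1) by (rule openin_continuous_map_preimage)
  define \<U> where "\<U> = {p ` G | G. openin X G \<and> (\<exists>C. compactin X C \<and> G \<subseteq> C \<and> C \<subseteq> PW)}"
  have "\<forall>U\<in>\<U>. openin Y U" unfolding \<U>_def using om unfolding open_map_def by auto
  moreover have "L \<subseteq> \<Union>\<U>"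
  proof
    fix y assume y: "y \<in> L"
    then obtain x where x: "x \<in> topspace X" "p x = y" using L(2) by force
    then have "x \<in> PW" unfolding PW_def using W(2) y by auto
    then obtain G C where "openin X G" "compactin X C" "x \<in> G" "G \<subseteq> C" "C \<subseteq> PW"
      using nb PWo unfolding neighbourhood_base_of by metis
    then show "y \<in> \<Union>\<U>" unfolding \<U>_def using x by blast
  qed
  ultimately obtain F where F: "finite F" "F \<subseteq> \<U>" "L \<subseteq> \<Union>F"
    using L(1) unfolding compactin_def by meson
  then have "\<forall>V\<in>F. \<exists>C. compactin X C \<and> C \<subseteq> PW \<and> V \<subseteq> p ` C"
    unfolding \<U>_def by blast
  then obtain c where c: "\<And>V. V \<in> F \<Longrightarrow> compactin X (c V) \<and> c V \<subseteq> PW \<and> V \<subseteq> p ` c V"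
    by metis
  show ?thesis
  proof
    show "compactin X (\<Union>(c ` F))" using F(1) c by (intro compactin_Union) auto
    show "\<Union>(c ` F) \<subseteq> {x \<in> topspace X. p x \<in> W}" using c unfolding PW_def by blast
    show "L \<subseteq> p ` \<Union>(c ` F)" using F(3) c by blast
  qed
qed

lemma prop_COMP_if_locally_finite_branch_points:
  assumes lc: "locally_compact_space X" and hs: "Hausdorff_space X"
    and t1: "t1_space Y" and lf: "locally_finite_set Y (branch_points Y)"
    and om: "open_map X Y p" and cp: "continuous_map X Y p" and sj: "p ` topspace X = topspace Y"
  shows "prop_COMP X Y p"
  unfolding prop_COMP_def
proof (intro allI impI)
  fix L assume L: "compactin Y L"
  have Lt: "L \<subseteq> topspace Y" using L compactin_subset_topspace by auto
  define D where "D = Y closure_of L - L"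
  have "D \<subseteq> branch_points Y"
    unfolding D_def by (rule closure_of_compact_diff_subset_branch_points[OF L])
  moreover have "D \<subseteq> topspace Y" unfolding D_def using closure_of_subset_topspace[of Y L] by blast
  ultimately have "closedin Y D"
    using closedin_locally_finite_set[OF t1 locally_finite_set_subset[OF lf]] by blast
  then have W: "openin Y (topspace Y - D)" by blast
  have LW: "L \<subseteq> topspace Y - D" using Lt unfolding D_def by blast
  have nb: "neighbourhood_base_of (compactin X) X"
    using lc locally_compact_space_neighbourhood_base[OF disjI1[OF hs]] by blast
  have "L \<subseteq> p ` topspace X" using Lt sj by simp
  then obtain K0 where K0: "compactin X K0" "K0 \<subseteq> {x \<in> topspace X. p x \<in> topspace Y - D}"
    "L \<subseteq> p ` K0"
    using compact_lift_into_open_preimage[OF nb om cp L _ W LW] by blast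
  define K where "K = {x \<in> topspace X. p x \<in> Y closure_of L} \<inter> K0"
  have "compactin X K" unfolding K_def
    using closedin_continuous_map_preimage[OF cp, of "Y closure_of L"] K0(1)
    by (intro closed_Int_compactin) auto
  moreover have "p ` K = L"
  proof
    show "p ` K \<subseteq> L" unfolding K_def using K0(2) unfolding D_def by auto
    show "L \<subseteq> p ` K"
      unfolding K_def using K0(2,3) closure_of_subset[OF Lt] by blast
  qed
  ultimately show "\<exists>K. compactin X K \<and> p ` K = L" by blast
qed

lemma psi_apply:
  assumes h: "Delta_map X Y p h" and cp: "continuous_map X Y p" and x: "x \<in> topspace X"
  shows "psi X p h (p x) = p (h x)"
proof -
  define x' where "x' = (SOME x'. x' \<in> topspace X \<and> p x' = p x)"
  have x': "x' \<in> topspace X \<and> p x' = p x" unfolding x'_def by (rule someI_ex) (use x in blast)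
  have "p x \<in> topspace Y" using cp x by (simp add: continuous_map_def Pi_iff)
  then obtain y' where "h ` {z \<in> topspace X. p z = p x} \<subseteq> {z \<in> topspace X. p z = y'}"
    using h unfolding Delta_map_def by blast
  then have "p (h x) = y'" "p (h x') = y'" using x x' by auto
  then show ?thesis unfolding psi_def x'_def[symmetric] by simp
qed

lemma psi_image:
  assumes h: "Delta_map X Y p h" and cp: "continuous_map X Y p" and K: "K \<subseteq> topspace X"
  shows "psi X p h ` p ` K = p ` h ` K"
  using psi_apply[OF h cp] K by (force simp: image_image)

lemma continuous_map_psi:
  assumes h: "Delta_map X Y p h" and om: "open_map X Y p" and cp: "continuous_map X Y p"
    and sj: "p ` topspace X = topspace Y"
  shows "continuous_map Y Y (psi X p h)"
proof -
  have ch: "continuous_map X X h" using h unfolding Delta_map_def by auto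
  have cph: "continuous_map X Y (p \<circ> h)" using ch cp by (rule continuous_map_compose)
  have "psi X p h ` topspace Y = (p \<circ> h) ` topspace X"
    using psi_image[OF h cp, of "topspace X"] sj by (simp add: image_comp)
  then have "psi X p h ` topspace Y \<subseteq> topspace Y"
    using continuous_map_image_subset_topspace[OF cph] by simp
  moreover have "openin Y {y \<in> topspace Y. psi X p h y \<in> U}" if U: "openin Y U" for U
  proof -
    have "{y \<in> topspace Y. psi X p h y \<in> U} = p ` {x \<in> topspace X. (p \<circ> h) x \<in> U}"
      using psi_apply[OF h cp] sj by force
    moreover have "openin X {x \<in> topspace X. (p \<circ> h) x \<in> U}"
      using cph U by (rule openin_continuous_map_preimage)
    ultimately show ?thesis using om unfolding open_map_def by metis
  qed
  ultimately show ?thesis unfolding continuous_map_def by blast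
qed

lemma topspace_compact_open: "topspace (compact_open A B S) = S"
proof -
  have "{f \<in> S. f ` {} \<subseteq> topspace B} \<in> {{f \<in> S. f ` K \<subseteq> U} | K U. compactin A K \<and> openin B U}"
    by blast
  then show ?thesis unfolding compact_open_def topology_generated_by_topspace by auto
qed

lemma prop_CONT_if_prop_COMP:
  assumes comp: "prop_COMP X Y p"
    and om: "open_map X Y p" and cp: "continuous_map X Y p" and sj: "p ` topspace X = topspace Y"
  shows "prop_CONT X Y p"
proof -
  define SY where "SY = {{g \<in> End_sp Y. g ` L \<subseteq> U} |L U. compactin Y L \<and> openin Y U}"
  have TY: "compact_open Y Y (End_sp Y) = topology_generated_by SY"
    unfolding SY_def compact_open_def by simp
  have img: "psi X p ` End_Delta X Y p \<subseteq> End_sp Y"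
    using continuous_map_psi[OF _ om cp sj] unfolding End_Delta_def End_sp_def by blast
  have preimage_open:
    "openin (compact_open X X (End_Delta X Y p)) (psi X p -` V \<inter> End_Delta X Y p)"
    if "V \<in> SY" for V
  proof -
    obtain L U where V: "V = {g \<in> End_sp Y. g ` L \<subseteq> U}" "compactin Y L" "openin Y U"
      using \<open>V \<in> SY\<close> unfolding SY_def by blast
    obtain K where K: "compactin X K" "p ` K = L" using comp V(2) unfolding prop_COMP_def by blast
    have Kt: "K \<subseteq> topspace X" using K(1) compactin_subset_topspace by auto
    define PU where "PU = {x \<in> topspace X. p x \<in> U}"
    have "openin X PU" unfolding PU_def using cp V(3) by (rule openin_continuous_map_preimage)
    moreover have "psi X p -` V \<inter> End_Delta X Y p = {h \<in> End_Delta X Y p. h ` K \<subseteq> PU}"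
    proof -
      have "psi X p h ` L \<subseteq> U \<longleftrightarrow> h ` K \<subseteq> PU" if h: "Delta_map X Y p h" for h
      proof -
        have "h ` K \<subseteq> topspace X"
          using h Kt continuous_map_image_subset_topspace image_mono
          unfolding Delta_map_def by (metis order_trans)
        then show ?thesis using psi_image[OF h cp Kt] K(2) unfolding PU_def by auto
      qed
      then show ?thesis using img unfolding V(1) End_Delta_def by (auto simp: image_subset_iff)
    qed
    ultimately show ?thesis
      unfolding compact_open_def using K(1) by (auto intro: topology_generated_by_Basis)
  qed
  have "\<Union>SY = End_sp Y"
    using topspace_compact_open[of Y Y "End_sp Y"] unfolding TY by simp
  then show ?thesis
    unfolding prop_CONT_def TY continuous_on_generated_topo_iff topspace_compact_open
    using preimage_open img by (intro conjI allI impI) auto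
qed

theorem mainTheorem8:
  fixes X :: "'a topology" and Y :: "'b topology" and p :: "'a \<Rightarrow> 'b"
  assumes "locally_compact_space X" and "Hausdorff_space X"
    and "t1_space Y" and "locally_finite_set Y (branch_points Y)"
    and "open_map X Y p" and "continuous_map X Y p" and "p ` topspace X = topspace Y"
  shows "prop_COMP X Y p \<and> prop_CONT X Y p"
proof
  show comp: "prop_COMP X Y p" using assms by (rule prop_COMP_if_locally_finite_branch_points)
  show "prop_CONT X Y p" using comp assms(5-7) by (rule prop_CONT_if_prop_COMP)
qed

end
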